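(* Let $mG$ be a finite canonical misinformation game, $\Gamma=(\mathcal{AD}^*(\{mG\}),E)$ its adaptation graph, and $\Gamma'$ the graph obtained from $\Gamma$ by omitting self-loops. Let $mG'$ be the last node on a maximal path in $\Gamma'$ starting from $mG$. Then every natural misinformed equilibrium of $mG'$ is a stable misinformed equilibrium of $mG$.
   Context: A normal-form game is $G=\langle N,S,P\rangle$ with finite players $N$, finite pure strategy sets $S_i$, positions $S=\times_i S_i$, payoffs $P_i:S\to\mathbb{R}$. A misinformation game $mG=\langle G^0,G^1,\dots,G^{|N|}\rangle$ consists of the actual game $G^0$ and subjective games $G^i$; it is canonical if all $G^i=\langle N,S,P^i\rangle$ differ from $G^0$ only in payoffs and in every $G^i$ all players have equally many pure strategies. $NME(mG)$ (natural misinformed equilibria) is the set of profiles $\sigma=(\sigma_1,\dots,\sigma_{|N|})$ such that each $\sigma_i$ is player $i$'s component of some Nash equilibrium of $G^i$. $\chi(\sigma)=\mathrm{supp}(\sigma_1)\times\dots\times\mathrm{supp}(\sigma_{|N|})$. For $\vec v\in S$, $mG_{\vec v}$ is obtained by replacing, in every $P^i$ ($i\ge1$), the payoff vector at position $\vec v$ by $P^0(\vec v)$. For a set $M$ of misinformation games, $\mathcal{AD}(M)=\{mG_{\vec u}: mG\in M,\sigma\in NME(mG),\vec u\in\chi(\sigma)\}$, $\mathcal{AD}^{(0)}(M)=M$, $\mathcal{AD}^{(t+1)}(M)=\mathcal{AD}^{(t)}(\mathcal{AD}(M))$, $\mathcal{AD}^*(M)=\bigcup_{t\ge0}\mathcal{AD}^{(t)}(M)$;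 the length $\mathfrak{L}$ is the least $t\ge0$ with $\mathcal{AD}^{(t+1)}(M)=\mathcal{AD}^{(t)}(M)$ and $\mathcal{AD}^\infty(M)=\mathcal{AD}^{(\mathfrak{L})}(M)$. A profile $\sigma$ is a stable misinformed equilibrium of $mG$ if there is $\widehat{mG}\in\mathcal{AD}^\infty(\{mG\})$ with $\sigma\in NME(\widehat{mG})$ and $\widehat{mG}_{\vec v}=\widehat{mG}$ for all $\vec v\in\chi(\sigma)$. The adaptation graph $\Gamma$ has vertex set $\mathcal{AD}^*(\{mG\})$ and an edge $(mG^1,mG^2)$ iff $mG^2=(mG^1)_{\vec v}$ for some $\sigma\in NME(mG^1)$, $\vec v\in\chi(\sigma)$. A maximal path is a directed path that cannot be extended. *)

theory Defs
  imports Complex_Main "HOL-Library.FuncSet"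
begin

text \<open>
Players are 1..n; player i has pure strategies 0..<m i (the same in every game,
as the games differ only in payoffs).  The payoff system
P :: nat \<Rightarrow> (nat \<Rightarrow> nat) \<Rightarrow> nat \<Rightarrow> real  gives P k v i, the payoff of player i at
position v in game G^k; k = 0 is the actual game, k = i (1 \<le> i \<le> n) is the
subjective game of player i.  A misinformation game with fixed n, m is thus
identified with its payoff system P.
\<close>

definition positions :: "nat \<Rightarrow> (nat \<Rightarrow> nat) \<Rightarrow> (nat \<Rightarrow> nat) set" where
  "positions n m = PiE {1..n} (\<lambda>i. {..<m i})"

definition mixed_strategy :: "nat \<Rightarrow> (nat \<Rightarrow> real) \<Rightarrow> bool" where
  "mixed_strategy k \<tau> \<longleftrightarrow> (\<forall>s. 0 \<le> \<tau> s) \<and> (\<forall>s. k \<le> s \<longrightarrow> \<tau> s = 0) \<and> sum \<tau> {..<k} = 1"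

definition mixed_profile :: "nat \<Rightarrow> (nat \<Rightarrow> nat) \<Rightarrow> (nat \<Rightarrow> nat \<Rightarrow> real) \<Rightarrow> bool" where
  "mixed_profile n m \<sigma> \<longleftrightarrow>
     (\<forall>j \<in> {1..n}. mixed_strategy (m j) (\<sigma> j)) \<and> (\<forall>j. j \<notin> {1..n} \<longrightarrow> \<sigma> j = (\<lambda>_. 0))"

definition exp_payoff ::
  "nat \<Rightarrow> (nat \<Rightarrow> nat) \<Rightarrow> (nat \<Rightarrow> (nat \<Rightarrow> nat) \<Rightarrow> nat \<Rightarrow> real) \<Rightarrow> nat \<Rightarrow>
   (nat \<Rightarrow> nat \<Rightarrow> real) \<Rightarrow> nat \<Rightarrow> real" where
  "exp_payoff n m P k \<sigma> i = (\<Sum>v \<in> positions n m. (\<Prod>j \<in> {1..n}. \<sigma> j (v j)) * P k v i)"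

definition nash_eq ::
  "nat \<Rightarrow> (nat \<Rightarrow> nat) \<Rightarrow> (nat \<Rightarrow> (nat \<Rightarrow> nat) \<Rightarrow> nat \<Rightarrow> real) \<Rightarrow> nat \<Rightarrow>
   (nat \<Rightarrow> nat \<Rightarrow> real) \<Rightarrow> bool" where
  "nash_eq n m P k \<sigma> \<longleftrightarrow> mixed_profile n m \<sigma> \<and>
     (\<forall>i \<in> {1..n}. \<forall>\<tau>. mixed_strategy (m i) \<tau> \<longrightarrow>
        exp_payoff n m P k (\<sigma>(i := \<tau>)) i \<le> exp_payoff n m P k \<sigma> i)"

definition NME ::
  "nat \<Rightarrow> (nat \<Rightarrow> nat) \<Rightarrow> (nat \<Rightarrow> (nat \<Rightarrow> nat) \<Rightarrow> nat \<Rightarrow> real) \<Rightarrow> (nat \<Rightarrow> nat \<Rightarrow> real) set" where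
  "NME n m P = {\<sigma>. (\<forall>j. j \<notin> {1..n} \<longrightarrow> \<sigma> j = (\<lambda>_. 0)) \<and>
                    (\<forall>i \<in> {1..n}. \<exists>\<tau>. nash_eq n m P i \<tau> \<and> \<sigma> i = \<tau> i)}"

definition supp :: "(nat \<Rightarrow> real) \<Rightarrow> nat set" where
  "supp \<tau> = {s. \<tau> s \<noteq> 0}"

definition chi :: "nat \<Rightarrow> (nat \<Rightarrow> nat \<Rightarrow> real) \<Rightarrow> (nat \<Rightarrow> nat) set" where
  "chi n \<sigma> = PiE {1..n} (\<lambda>i. supp (\<sigma> i))"

definition adapt ::
  "nat \<Rightarrow> (nat \<Rightarrow> nat) \<Rightarrow> (nat \<Rightarrow> (nat \<Rightarrow> nat) \<Rightarrow> nat \<Rightarrow> real) \<Rightarrow>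
   (nat \<Rightarrow> (nat \<Rightarrow> nat) \<Rightarrow> nat \<Rightarrow> real)" where
  "adapt n v P = (\<lambda>k w i. if k \<in> {1..n} \<and> w = v \<and> i \<in> {1..n} then P 0 v i else P k w i)"

definition AD ::
  "nat \<Rightarrow> (nat \<Rightarrow> nat) \<Rightarrow> (nat \<Rightarrow> (nat \<Rightarrow> nat) \<Rightarrow> nat \<Rightarrow> real) set \<Rightarrow>
   (nat \<Rightarrow> (nat \<Rightarrow> nat) \<Rightarrow> nat \<Rightarrow> real) set" where
  "AD n m M = {adapt n u P | P \<sigma> u. P \<in> M \<and> \<sigma> \<in> NME n m P \<and> u \<in> chi n \<sigma>}"

definition AD_iter where
  "AD_iter n m t M = (AD n m ^^ t) M"

definition AD_star where
  "AD_star n m M = (\<Union>t. AD_iter n m t M)"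

definition AD_length where
  "AD_length n m M = (LEAST t. AD_iter n m (Suc t) M = AD_iter n m t M)"

definition AD_inf where
  "AD_inf n m M = AD_iter n m (AD_length n m M) M"

definition stable_ME ::
  "nat \<Rightarrow> (nat \<Rightarrow> nat) \<Rightarrow> (nat \<Rightarrow> (nat \<Rightarrow> nat) \<Rightarrow> nat \<Rightarrow> real) \<Rightarrow> (nat \<Rightarrow> nat \<Rightarrow> real) \<Rightarrow> bool" where
  "stable_ME n m P \<sigma> \<longleftrightarrow> (\<exists>Q \<in> AD_inf n m {P}. \<sigma> \<in> NME n m Q \<and> (\<forall>v \<in> chi n \<sigma>. adapt n v Q = Q))"

definition adapt_edges where
  "adapt_edges n m P = {(A, B). A \<in> AD_star n m {P} \<and>
       (\<exists>\<sigma> \<in> NME n m A. \<exists>v \<in> chi n \<sigma>. B = adapt n v A)}"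

definition adapt_edges' where
  "adapt_edges' n m P = {(A, B). (A, B) \<in> adapt_edges n m P \<and> A \<noteq> B}"

definition is_path :: "('a \<times> 'a) set \<Rightarrow> 'a list \<Rightarrow> bool" where
  "is_path E xs \<longleftrightarrow> xs \<noteq> [] \<and> distinct xs \<and> (\<forall>i. Suc i < length xs \<longrightarrow> (xs ! i, xs ! Suc i) \<in> E)"

definition maximal_path_from :: "('a \<times> 'a) set \<Rightarrow> 'a \<Rightarrow> 'a list \<Rightarrow> bool" where
  "maximal_path_from E x xs \<longleftrightarrow> is_path E xs \<and> hd xs = x \<and>
     \<not> (\<exists>w. (last xs, w) \<in> E \<and> w \<notin> set xs)"

end

theory Submission
  imports Defs
begin

text \<open>
Adapting at a position overwrites subjective payoffs by actual ones, so adaptations are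
idempotent and commute. Hence the set of positions at which a game is already adapted grows
along adaptation steps, strictly along steps that change the game. So an adaptation walk longer
than the number of positions contains a self-loop, which can be dropped or repeated: the
iterates of AD become constant, and AD_inf is every sufficiently late iterate.
At the last node of a maximal loop-free path, adapting on the support of an equilibrium cannot
leave the path, so it leads back to an earlier node, whose adapted positions are among those of
the last node; hence the last node is already adapted there. It therefore carries a self-loop,
which keeps it in every late iterate, in particular in AD_inf.
\<close>

lemma relpow_long_has_loop:
  fixes \<mu> :: "'a \<Rightarrow> nat"
  assumes strict: "\<And>a b. (a, b) \<in> R \<Longrightarrow> a \<noteq> b \<Longrightarrow> \<mu> a < \<mu> b"
    and bounded: "\<And>a. \<mu> a \<le> N"
    and walk: "(a, c) \<in> R ^^ t" and long: "N < t"
  obtains x i j where "(a, x) \<in> R ^^ i" "(x, x) \<in> R" "(x, c) \<in> R ^^ j" "t = Suc (i + j)"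
proof -
  have "\<mu> a + t \<le> N \<or> (\<exists>x i j. (a, x) \<in> R ^^ i \<and> (x, x) \<in> R \<and> (x, c) \<in> R ^^ j \<and> t = Suc (i + j))"
    if "(a, c) \<in> R ^^ t" for a t
    using that
  proof (induction t arbitrary: a)
    case 0
    then show ?case using bounded by simp
  next
    case (Suc t)
    then obtain b where ab: "(a, b) \<in> R" and bc: "(b, c) \<in> R ^^ t"
      by (blast elim: relpow_Suc_E2)
    show ?case
    proof (cases "a = b")
      case True
      then show ?thesis using ab bc by force
    next
      case False
      with strict ab have "\<mu> a < \<mu> b" by blast
      from Suc.IH[OF bc] show ?thesis
      proof
        assume "\<mu> b + t \<le> N"
        with \<open>\<mu> a < \<mu> b\<close> show ?thesis by simp
      next
        assume "\<exists>x i j. (b, x) \<in> R ^^ i \<and> (x, x) \<in> R \<and> (x, c) \<in> R ^^ j \<and> t = Suc (i + j)"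
        then obtain x i j where "(b, x) \<in> R ^^ i" "(x, x) \<in> R" "(x, c) \<in> R ^^ j" "t = Suc (i + j)"
          by blast
        with ab have "(a, x) \<in> R ^^ Suc i \<and> (x, x) \<in> R \<and> (x, c) \<in> R ^^ j \<and> Suc t = Suc (Suc i + j)"
          using relpow_Suc_I2 by auto
        then show ?thesis by blast
      qed
    qed
  qed
  with walk long that show ?thesis by force
qed

lemma relpow_Suc_eq_if_long:
  fixes \<mu> :: "'a \<Rightarrow> nat"
  assumes strict: "\<And>a b. (a, b) \<in> R \<Longrightarrow> a \<noteq> b \<Longrightarrow> \<mu> a < \<mu> b"
    and bounded: "\<And>a. \<mu> a \<le> N" and long: "N < t"
  shows "R ^^ Suc t = R ^^ t"
proof (rule subset_antisym; rule subrelI)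
  fix a c assume walk: "(a, c) \<in> R ^^ Suc t"
  have "N < Suc t" using long by simp
  then obtain x i j where ax: "(a, x) \<in> R ^^ i" and xc: "(x, c) \<in> R ^^ j"
    and t: "Suc t = Suc (i + j)"
    using relpow_long_has_loop[where R = R and \<mu> = \<mu> and N = N, OF strict bounded walk] by blast
  from ax xc have "(a, c) \<in> R ^^ (i + j)"
    by (rule relpow_trans)
  with t show "(a, c) \<in> R ^^ t"
    by simp
next
  fix a c assume walk: "(a, c) \<in> R ^^ t"
  obtain x i j where ax: "(a, x) \<in> R ^^ i" and loop: "(x, x) \<in> R"
    and xc: "(x, c) \<in> R ^^ j" and t: "t = Suc (i + j)"
    using relpow_long_has_loop[where R = R and \<mu> = \<mu> and N = N, OF strict bounded walk long] by blast
  have "(x, c) \<in> R ^^ Suc (Suc j)"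
    using relpow_Suc_I2[OF loop relpow_Suc_I2[OF loop xc]] .
  with ax have "(a, c) \<in> R ^^ (i + Suc (Suc j))"
    by (rule relpow_trans)
  with t show "(a, c) \<in> R ^^ Suc t"
    by simp
qed

lemma relpow_extend_by_loop:
  assumes walk: "(a, b) \<in> R ^^ k" and loop: "(b, b) \<in> R" and "k \<le> t"
  shows "(a, b) \<in> R ^^ t"
  using \<open>k \<le> t\<close>
proof (induction t rule: dec_induct)
  case base
  show ?case using walk .
next
  case (step t)
  from step.IH loop show ?case
    by (rule relpow_Suc_I)
qed

lemma funpow_eq_if_stable:
  fixes f :: "'a \<Rightarrow> 'a"
  assumes stable: "(f ^^ Suc k) x = (f ^^ k) x" and "k \<le> t"
  shows "(f ^^ t) x = (f ^^ k) x"
  using \<open>k \<le> t\<close>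
proof (induction t rule: dec_induct)
  case base
  show ?case ..
next
  case (step t)
  have "(f ^^ Suc t) x = f ((f ^^ t) x)"
    by simp
  also have "\<dots> = (f ^^ Suc k) x"
    using step.IH by simp
  finally show ?case
    using stable by simp
qed

lemma is_path_rtrancl_last:
  assumes path: "is_path E xs" and x: "x \<in> set xs"
  shows "(x, last xs) \<in> E\<^sup>*"
proof -
  have "(xs ! i, last xs) \<in> E\<^sup>*" if "i \<le> length xs - 1" for i
    using that
  proof (induction i rule: inc_induct)
    case base
    then show ?case using path by (simp add: is_path_def last_conv_nth)
  next
    case (step i)
    then have "(xs ! i, xs ! Suc i) \<in> E"
      using path unfolding is_path_def by simp
    then show ?case
      using step.IH by (rule converse_rtrancl_into_rtrancl)
  qed
  with x show ?thesis by (auto simp: in_set_conv_nth)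
qed

lemma maximal_path_from_hd_in_set:
  "maximal_path_from E x xs \<Longrightarrow> x \<in> set xs"
  unfolding maximal_path_from_def is_path_def by auto

type_synonym payoff_system = "nat \<Rightarrow> (nat \<Rightarrow> nat) \<Rightarrow> nat \<Rightarrow> real"

definition adapt_rel :: "nat \<Rightarrow> (nat \<Rightarrow> nat) \<Rightarrow> (payoff_system \<times> payoff_system) set" where
  "adapt_rel n m = {(A, B). \<exists>\<sigma> \<in> NME n m A. \<exists>v \<in> chi n \<sigma>. B = adapt n v A}"

definition adapted_positions :: "nat \<Rightarrow> payoff_system \<Rightarrow> (nat \<Rightarrow> nat) set" where
  "adapted_positions n Q = {v. adapt n v Q = Q}"

lemma adapt_adapt_same [simp]: "adapt n v (adapt n v Q) = adapt n v Q"
  by (auto simp: adapt_def fun_eq_iff)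

lemma adapt_commute: "adapt n u (adapt n v Q) = adapt n v (adapt n u Q)"
  unfolding adapt_def by (intro ext) auto

lemma mem_adapted_positions_adapt: "v \<in> adapted_positions n (adapt n v Q)"
  by (simp add: adapted_positions_def)

lemma adapted_positions_adapt_mono: "adapted_positions n Q \<subseteq> adapted_positions n (adapt n v Q)"
  by (auto simp: adapted_positions_def) (metis adapt_commute)

lemma finite_positions: "finite (positions n m)"
  by (simp add: positions_def finite_PiE)

lemma supp_subset_if_mixed_strategy: "mixed_strategy k \<tau> \<Longrightarrow> supp \<tau> \<subseteq> {..<k}"
  by (auto simp: mixed_strategy_def supp_def not_less[symmetric])

lemma supp_nonempty_if_mixed_strategy: "mixed_strategy k \<tau> \<Longrightarrow> supp \<tau> \<noteq> {}"
  unfolding mixed_strategy_def supp_def by (metis (mono_tags) empty_Collect_eq sum.neutral zero_neq_one)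

lemma NME_mixed_strategy: "\<sigma> \<in> NME n m A \<Longrightarrow> i \<in> {1..n} \<Longrightarrow> mixed_strategy (m i) (\<sigma> i)"
  unfolding NME_def nash_eq_def mixed_profile_def by force

lemma chi_NME_subset_positions: "\<sigma> \<in> NME n m A \<Longrightarrow> chi n \<sigma> \<subseteq> positions n m"
  unfolding chi_def positions_def
  by (intro PiE_mono) (blast dest: NME_mixed_strategy supp_subset_if_mixed_strategy)

lemma chi_NME_nonempty: "\<sigma> \<in> NME n m A \<Longrightarrow> chi n \<sigma> \<noteq> {}"
  unfolding chi_def
  by (auto simp: PiE_eq_empty_iff dest: NME_mixed_strategy supp_nonempty_if_mixed_strategy)

lemma adapted_positions_rtrancl_mono:
  "(A, B) \<in> (adapt_rel n m)\<^sup>* \<Longrightarrow> adapted_positions n A \<subseteq> adapted_positions n B"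
  by (induction rule: rtrancl_induct)
    (use adapted_positions_adapt_mono in \<open>fastforce simp: adapt_rel_def\<close>)+

lemma card_adapted_positions_le: "card (adapted_positions n A \<inter> positions n m) \<le> card (positions n m)"
  by (simp add: card_mono finite_positions)

lemma card_adapted_positions_less:
  assumes "(A, B) \<in> adapt_rel n m" "A \<noteq> B"
  shows "card (adapted_positions n A \<inter> positions n m) < card (adapted_positions n B \<inter> positions n m)"
proof (rule psubset_card_mono)
  show "finite (adapted_positions n B \<inter> positions n m)"
    by (simp add: finite_positions)
  obtain \<sigma> v where \<sigma>: "\<sigma> \<in> NME n m A" and v: "v \<in> chi n \<sigma>" and B: "B = adapt n v A"
    using assms(1) unfolding adapt_rel_def by blast
  have "v \<in> positions n m"
    using chi_NME_subset_positions[OF \<sigma>] v by blast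
  moreover have "v \<notin> adapted_positions n A"
    using B assms(2) by (simp add: adapted_positions_def)
  ultimately show "adapted_positions n A \<inter> positions n m \<subset> adapted_positions n B \<inter> positions n m"
    using B adapted_positions_adapt_mono mem_adapted_positions_adapt by blast
qed

lemma AD_eq_Image: "AD n m M = adapt_rel n m `` M"
  unfolding AD_def adapt_rel_def by blast

lemma AD_iter_eq_relpow_Image: "AD_iter n m t M = (adapt_rel n m ^^ t) `` M"
  by (induction t) (simp_all add: AD_iter_def AD_eq_Image relcomp_Image)

lemma AD_star_eq_rtrancl_Image: "AD_star n m M = (adapt_rel n m)\<^sup>* `` M"
  unfolding AD_star_def AD_iter_eq_relpow_Image rtrancl_is_UN_relpow by blast

lemma AD_iter_eq_AD_inf:
  assumes "AD_length n m M \<le> t"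
  shows "AD_iter n m t M = AD_inf n m M"
proof -
  have "AD_iter n m (Suc t) M = AD_iter n m t M" if "card (positions n m) < t" for t
  proof -
    have "adapt_rel n m ^^ Suc t = adapt_rel n m ^^ t"
      using card_adapted_positions_less card_adapted_positions_le that
      by (rule relpow_Suc_eq_if_long[where \<mu> = "\<lambda>A. card (adapted_positions n A \<inter> positions n m)"])
    then show ?thesis
      by (simp only: AD_iter_eq_relpow_Image)
  qed
  then have "\<exists>t. AD_iter n m (Suc t) M = AD_iter n m t M"
    by (meson lessI)
  then have "AD_iter n m (Suc (AD_length n m M)) M = AD_iter n m (AD_length n m M) M"
    unfolding AD_length_def by (rule LeastI_ex)
  then show ?thesis
    using assms unfolding AD_inf_def AD_iter_def by (rule funpow_eq_if_stable)
qed

lemma adapt_edges'_subset_adapt_rel: "adapt_edges' n m P \<subseteq> adapt_rel n m"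
  by (auto simp: adapt_edges'_def adapt_edges_def adapt_rel_def)

lemma maximal_path_from_rtrancl_last:
  assumes "maximal_path_from (adapt_edges' n m P) P xs" "x \<in> set xs"
  shows "(x, last xs) \<in> (adapt_rel n m)\<^sup>*"
proof -
  have "is_path (adapt_edges' n m P) xs"
    using assms(1) unfolding maximal_path_from_def by blast
  then have "(x, last xs) \<in> (adapt_edges' n m P)\<^sup>*"
    using assms(2) by (rule is_path_rtrancl_last)
  then show ?thesis
    using rtrancl_mono[OF adapt_edges'_subset_adapt_rel] by blast
qed

lemma maximal_path_last_adapted:
  assumes path: "maximal_path_from (adapt_edges' n m P) P xs"
    and \<sigma>: "\<sigma> \<in> NME n m (last xs)" and v: "v \<in> chi n \<sigma>"
  shows "adapt n v (last xs) = last xs"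
proof (rule ccontr)
  assume changed: "adapt n v (last xs) \<noteq> last xs"
  have "last xs \<in> AD_star n m {P}"
    using maximal_path_from_rtrancl_last[OF path maximal_path_from_hd_in_set[OF path]]
    by (simp add: AD_star_eq_rtrancl_Image)
  with \<sigma> v changed have "(last xs, adapt n v (last xs)) \<in> adapt_edges' n m P"
    unfolding adapt_edges'_def adapt_edges_def by fastforce
  with path have "adapt n v (last xs) \<in> set xs"
    unfolding maximal_path_from_def by blast
  then have "adapted_positions n (adapt n v (last xs)) \<subseteq> adapted_positions n (last xs)"
    by (intro adapted_positions_rtrancl_mono[where m = m] maximal_path_from_rtrancl_last[OF path])
  then have "v \<in> adapted_positions n (last xs)"
    using mem_adapted_positions_adapt by blast
  with changed show False
    by (simp add: adapted_positions_def)
qed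

theorem corollary3:
  fixes n :: nat and m :: "nat \<Rightarrow> nat"
    and P :: "nat \<Rightarrow> (nat \<Rightarrow> nat) \<Rightarrow> nat \<Rightarrow> real"
    and xs :: "(nat \<Rightarrow> (nat \<Rightarrow> nat) \<Rightarrow> nat \<Rightarrow> real) list"
    and \<sigma> :: "nat \<Rightarrow> nat \<Rightarrow> real"
  assumes "1 \<le> n"
    and "\<forall>i \<in> {1..n}. 1 \<le> m i"
    and path: "maximal_path_from (adapt_edges' n m P) P xs"
    and \<sigma>: "\<sigma> \<in> NME n m (last xs)"
  shows "stable_ME n m P \<sigma>"
proof -
  have adapted: "\<forall>v \<in> chi n \<sigma>. adapt n v (last xs) = last xs"
    using maximal_path_last_adapted[OF path \<sigma>] by blast
  moreover obtain v where "v \<in> chi n \<sigma>"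
    using chi_NME_nonempty[OF \<sigma>] by blast
  ultimately have loop: "(last xs, last xs) \<in> adapt_rel n m"
    using \<sigma> unfolding adapt_rel_def by force
  obtain k where walk: "(P, last xs) \<in> adapt_rel n m ^^ k"
    using maximal_path_from_rtrancl_last[OF path maximal_path_from_hd_in_set[OF path]]
    by (auto simp: rtrancl_power)
  let ?t = "max k (AD_length n m {P})"
  have "last xs \<in> AD_iter n m ?t {P}"
    using relpow_extend_by_loop[OF walk loop] by (simp add: AD_iter_eq_relpow_Image)
  then have "last xs \<in> AD_inf n m {P}"
    by (simp add: AD_iter_eq_AD_inf)
  with \<sigma> adapted show ?thesis
    unfolding stable_ME_def by blast
qed

end
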